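(* If an iCRS is confluent modulo hypercollapsing subterms, i.e. for all terms $s\sim_{hc}t$ and all $s\twoheadrightarrow s'$, $t\twoheadrightarrow t'$ there are $s'',t''$ with $s'\twoheadrightarrow s''$, $t'\twoheadrightarrow t''$ and $s''\sim_{hc}t''$, then it has the properties NF, UN and UN$^\rightarrow$.
   Context: Infinitary Combinatory Reduction Systems (iCRSs). Fix a signature $\Sigma$ of function symbols of finite arity, variables, and meta-variables of each finite arity. Meta-terms are the possibly infinite trees built from variables $x$, abstractions $[x]s$, $Z(s_1,\dots,s_n)$ for meta-variables $Z$ and $f(s_1,\dots,s_n)$ for $f\in\Sigma$ (metric completion of finite meta-terms modulo $\alpha$-equivalence under $d(s,t)=2^{-k}$, $k$ least depth of difference). Terms have no meta-variables. A rewrite rule $l\to r$: $l$ a finite pattern (meta-variables applied to distinct bound variables) with function symbol at the root, $r$ a meta-term with meta-variables from $l$, both closed, $r$ without infinite chains of nested meta-variable applications. A rewrite step $C[\bar\sigma(l)]\to C[\bar\sigma(r)]$ for a valuation $\bar\sigma$ (meta-variables to substitutes $\underline{\lambda}\vec x.t$, $(\underline{\lambda}\vec x.t)(\vec t)=t[\vec x:=\vec t]$) and one-hole context $C$; $\bar\sigma(l)$ is a redex, collapsing if the right-hand side of its rule has a meta-variable at the root. A transfinite reduction $(s_\beta)_{\beta<\alpha}$ is strongly convergent if $\alpha$ is a successor ordinal and at every limit $\gamma<\alpha$, $s_\beta\to s_\gamma$ and depths of contracted redexes tend to infinity; $s\twoheadrightarrow t$ denotes such a reduction. A term $s$ is hypercollapsing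 if for every $t$ with $s\twoheadrightarrow t$ there is $t'$ with $t\twoheadrightarrow t'$ having a collapsing redex at the root. $s\sim_{hc}t$ if $t$ can be obtained from $s$ by replacing some hypercollapsing subterms of $s$ by other hypercollapsing terms. A normal form is a term containing no redex. Let $\mathrel{(\twoheadleftarrow\cdot\twoheadrightarrow)^*}$ be the reflexive, symmetric, transitive closure of $\twoheadrightarrow$. NF: $s\mathrel{(\twoheadleftarrow\cdot\twoheadrightarrow)^*}t$ with $t$ a normal form implies $s\twoheadrightarrow t$. UN: $s\mathrel{(\twoheadleftarrow\cdot\twoheadrightarrow)^*}t$ with $s,t$ normal forms implies $s=t$. UN$^\rightarrow$: $t\twoheadleftarrow s\twoheadrightarrow t'$ with $t,t'$ normal forms implies $t=t'$. *)

theory Defs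
  imports Main
begin

text \<open>Bound variables are de Bruijn indices (the canonical representative of an
alpha-equivalence class); free variables are names of type 'v.  Meta-terms are
possibly infinite trees (a codatatype), i.e. the metric completion of the finite
meta-terms.  Abstraction [x]s is Ab s; Z(s1,...,sn) is MV Z [s1,...,sn].\<close>

codatatype ('f, 'v, 'm) mt =
    BV nat
  | FV 'v
  | Ab "('f, 'v, 'm) mt"
  | Fn 'f "('f, 'v, 'm) mt list"
  | MV 'm "('f, 'v, 'm) mt list"

datatype ('f, 'v, 'm) label = LBV nat | LFV 'v | LAb | LFn 'f | LMV 'm

definition root_lab :: "('f, 'v, 'm) mt \<Rightarrow> ('f, 'v, 'm) label" where
  "root_lab t = (case t of BV n \<Rightarrow> LBV n | FV x \<Rightarrow> LFV x | Ab _ \<Rightarrow> LAb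
                  | Fn f _ \<Rightarrow> LFn f | MV Z _ \<Rightarrow> LMV Z)"

type_synonym pos = "nat list"

fun subt :: "('f, 'v, 'm) mt \<Rightarrow> pos \<Rightarrow> ('f, 'v, 'm) mt option" where
  "subt t [] = Some t"
| "subt t (i # p) = (case t of
       Ab s \<Rightarrow> (if i = 0 then subt s p else None)
     | Fn f ts \<Rightarrow> (if i < length ts then subt (ts ! i) p else None)
     | MV Z ts \<Rightarrow> (if i < length ts then subt (ts ! i) p else None)
     | _ \<Rightarrow> None)"

definition lab :: "('f, 'v, 'm) mt \<Rightarrow> pos \<Rightarrow> ('f, 'v, 'm) label option" where
  "lab t p = map_option root_lab (subt t p)"

fun absd :: "('f, 'v, 'm) mt \<Rightarrow> pos \<Rightarrow> nat" where
  "absd t [] = 0"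
| "absd t (i # p) = (case t of
       Ab s \<Rightarrow> Suc (absd s p)
     | Fn f ts \<Rightarrow> absd (ts ! i) p
     | MV Z ts \<Rightarrow> absd (ts ! i) p
     | _ \<Rightarrow> 0)"

fun repl :: "('f, 'v, 'm) mt \<Rightarrow> pos \<Rightarrow> ('f, 'v, 'm) mt \<Rightarrow> ('f, 'v, 'm) mt" where
  "repl t [] u = u"
| "repl t (i # p) u = (case t of
       Ab s \<Rightarrow> (if i = 0 then Ab (repl s p u) else t)
     | Fn f ts \<Rightarrow> (if i < length ts then Fn f (ts[i := repl (ts ! i) p u]) else t)
     | MV Z ts \<Rightarrow> (if i < length ts then MV Z (ts[i := repl (ts ! i) p u]) else t)
     | _ \<Rightarrow> t)"

definition wf_mt :: "('f \<Rightarrow> nat) \<Rightarrow> ('m \<Rightarrow> nat) \<Rightarrow> ('f, 'v, 'm) mt \<Rightarrow> bool" where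
  "wf_mt ar mar t \<longleftrightarrow> (\<forall>p u. subt t p = Some u \<longrightarrow>
      (case u of Fn f ts \<Rightarrow> length ts = ar f | MV Z ts \<Rightarrow> length ts = mar Z | _ \<Rightarrow> True))"

definition no_mv :: "('f, 'v, 'm) mt \<Rightarrow> bool" where
  "no_mv t \<longleftrightarrow> (\<forall>p Z. lab t p \<noteq> Some (LMV Z))"

definition bv_closed :: "('f, 'v, 'm) mt \<Rightarrow> bool" where
  "bv_closed t \<longleftrightarrow> (\<forall>p n. lab t p = Some (LBV n) \<longrightarrow> n < absd t p)"

definition closed_mt :: "('f, 'v, 'm) mt \<Rightarrow> bool" where
  "closed_mt t \<longleftrightarrow> bv_closed t \<and> (\<forall>p x. lab t p \<noteq> Some (LFV x))"

text \<open>Possibly open terms (as occurring as subterms; may have dangling indices).\<close>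
definition is_pterm :: "('f \<Rightarrow> nat) \<Rightarrow> ('m \<Rightarrow> nat) \<Rightarrow> ('f, 'v, 'm) mt \<Rightarrow> bool" where
  "is_pterm ar mar t \<longleftrightarrow> wf_mt ar mar t \<and> no_mv t"

definition is_term :: "('f \<Rightarrow> nat) \<Rightarrow> ('m \<Rightarrow> nat) \<Rightarrow> ('f, 'v, 'm) mt \<Rightarrow> bool" where
  "is_term ar mar t \<longleftrightarrow> is_pterm ar mar t \<and> bv_closed t"

definition mvars :: "('f, 'v, 'm) mt \<Rightarrow> 'm set" where
  "mvars t = {Z. \<exists>p. lab t p = Some (LMV Z)}"

definition finite_mt :: "('f, 'v, 'm) mt \<Rightarrow> bool" where
  "finite_mt t \<longleftrightarrow> finite {p. subt t p \<noteq> None}"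

definition is_pattern :: "('f, 'v, 'm) mt \<Rightarrow> bool" where
  "is_pattern l \<longleftrightarrow> finite_mt l \<and> (\<exists>f ts. l = Fn f ts) \<and>
     (\<forall>p Z ts. subt l p = Some (MV Z ts) \<longrightarrow>
        (\<exists>ns. ts = map BV ns \<and> distinct ns))"

definition no_inf_mv_chain :: "('f, 'v, 'm) mt \<Rightarrow> bool" where
  "no_inf_mv_chain r \<longleftrightarrow> \<not> (\<exists>g :: nat \<Rightarrow> pos.
     (\<forall>i. \<exists>q. q \<noteq> [] \<and> g (Suc i) = g i @ q) \<and> (\<forall>i. \<exists>Z. lab r (g i) = Some (LMV Z)))"

definition is_rule :: "('f \<Rightarrow> nat) \<Rightarrow> ('m \<Rightarrow> nat) \<Rightarrow> ('f, 'v, 'm) mt \<times> ('f, 'v, 'm) mt \<Rightarrow> bool" where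
  "is_rule ar mar lr \<longleftrightarrow> (case lr of (l, r) \<Rightarrow>
     wf_mt ar mar l \<and> wf_mt ar mar r \<and> is_pattern l \<and> closed_mt l \<and> closed_mt r \<and>
     mvars r \<subseteq> mvars l \<and> no_inf_mv_chain r)"

definition icrs_rules :: "('f \<Rightarrow> nat) \<Rightarrow> ('m \<Rightarrow> nat) \<Rightarrow> (('f, 'v, 'm) mt \<times> ('f, 'v, 'm) mt) set \<Rightarrow> bool" where
  "icrs_rules ar mar R \<longleftrightarrow> (\<forall>lr \<in> R. is_rule ar mar lr)"

primcorec shift :: "nat \<Rightarrow> nat \<Rightarrow> ('f, 'v, 'm) mt \<Rightarrow> ('f, 'v, 'm) mt" where
  "shift c m t = (case t of
       BV k \<Rightarrow> BV (if c \<le> k then k + m else k)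
     | FV x \<Rightarrow> FV x
     | Ab s \<Rightarrow> Ab (shift (Suc c) m s)
     | Fn f ts \<Rightarrow> Fn f (map (shift c m) ts)
     | MV Z ts \<Rightarrow> MV Z (map (shift c m) ts))"

text \<open>Sub vs d e u v: v is the result of applying the substitute (lambda x1..xn. u),
n = length vs, to the arguments vs, where u is currently inspected below e of its own
binders; in u the index e+n-j (at local depth e) denotes x_j (innermost binder = x_n),
indices above refer to the context of the redex and are relocated below d binders of
the rule-side.  The arguments vs live at the same depth as the meta-variable
application and are shifted when placed under binders of u.\<close>
coinductive Sub :: "('f, 'v, 'm) mt list \<Rightarrow> nat \<Rightarrow> nat \<Rightarrow> ('f, 'v, 'm) mt \<Rightarrow> ('f, 'v, 'm) mt \<Rightarrow> bool"
  for vs :: "('f, 'v, 'm) mt list" and d :: nat where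
  Sub_bound: "k < e \<Longrightarrow> Sub vs d e (BV k) (BV k)"
| Sub_arg: "e \<le> k \<Longrightarrow> k < e + length vs \<Longrightarrow>
     Sub vs d e (BV k) (shift 0 e (vs ! (length vs - 1 - (k - e))))"
| Sub_ctx: "e + length vs \<le> k \<Longrightarrow> Sub vs d e (BV k) (BV (k - length vs + d))"
| Sub_FV: "Sub vs d e (FV x) (FV x)"
| Sub_Ab: "Sub vs d (Suc e) u v \<Longrightarrow> Sub vs d e (Ab u) (Ab v)"
| Sub_Fn: "list_all2 (Sub vs d e) us ws \<Longrightarrow> Sub vs d e (Fn f us) (Fn f ws)"

text \<open>Inst \<sigma> d r v: v is \<sigma>(r), where r occurs below d binders of the rule side.
A valuation maps each meta-variable Z to the body u of a substitute
(lambda x1..x_(mar Z). u).\<close>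
coinductive Inst :: "('m \<Rightarrow> ('f, 'v, 'm) mt) \<Rightarrow> nat \<Rightarrow> ('f, 'v, 'm) mt \<Rightarrow> ('f, 'v, 'm) mt \<Rightarrow> bool"
  for \<sigma> :: "'m \<Rightarrow> ('f, 'v, 'm) mt" where
  Inst_BV: "Inst \<sigma> d (BV k) (BV k)"
| Inst_FV: "Inst \<sigma> d (FV x) (FV x)"
| Inst_Ab: "Inst \<sigma> (Suc d) r v \<Longrightarrow> Inst \<sigma> d (Ab r) (Ab v)"
| Inst_Fn: "list_all2 (Inst \<sigma> d) rs vs \<Longrightarrow> Inst \<sigma> d (Fn f rs) (Fn f vs)"
| Inst_MV: "list_all2 (Inst \<sigma> d) rs vs \<Longrightarrow> Sub vs d 0 (\<sigma> Z) v \<Longrightarrow> Inst \<sigma> d (MV Z rs) v"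

definition valuation :: "('f \<Rightarrow> nat) \<Rightarrow> ('m \<Rightarrow> nat) \<Rightarrow> ('m \<Rightarrow> ('f, 'v, 'm) mt) \<Rightarrow> bool" where
  "valuation ar mar \<sigma> \<longleftrightarrow> (\<forall>Z. is_pterm ar mar (\<sigma> Z))"

definition step :: "('f \<Rightarrow> nat) \<Rightarrow> ('m \<Rightarrow> nat) \<Rightarrow> (('f, 'v, 'm) mt \<times> ('f, 'v, 'm) mt) set \<Rightarrow>
    pos \<Rightarrow> ('f, 'v, 'm) mt \<Rightarrow> ('f, 'v, 'm) mt \<Rightarrow> bool" where
  "step ar mar R p s t \<longleftrightarrow> (\<exists>l r \<sigma> a b. (l, r) \<in> R \<and> valuation ar mar \<sigma> \<and>
      subt s p = Some a \<and> Inst \<sigma> 0 l a \<and> Inst \<sigma> 0 r b \<and> t = repl s p b)"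

definition has_redex :: "('f \<Rightarrow> nat) \<Rightarrow> ('m \<Rightarrow> nat) \<Rightarrow> (('f, 'v, 'm) mt \<times> ('f, 'v, 'm) mt) set \<Rightarrow>
    ('f, 'v, 'm) mt \<Rightarrow> bool" where
  "has_redex ar mar R s \<longleftrightarrow> (\<exists>p l r \<sigma> a. (l, r) \<in> R \<and> valuation ar mar \<sigma> \<and>
      subt s p = Some a \<and> Inst \<sigma> 0 l a)"

definition normal_form :: "('f \<Rightarrow> nat) \<Rightarrow> ('m \<Rightarrow> nat) \<Rightarrow> (('f, 'v, 'm) mt \<times> ('f, 'v, 'm) mt) set \<Rightarrow>
    ('f, 'v, 'm) mt \<Rightarrow> bool" where
  "normal_form ar mar R t \<longleftrightarrow> is_term ar mar t \<and> \<not> has_redex ar mar R t"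

definition collapsing_root :: "('f \<Rightarrow> nat) \<Rightarrow> ('m \<Rightarrow> nat) \<Rightarrow> (('f, 'v, 'm) mt \<times> ('f, 'v, 'm) mt) set \<Rightarrow>
    ('f, 'v, 'm) mt \<Rightarrow> bool" where
  "collapsing_root ar mar R t \<longleftrightarrow> (\<exists>l r \<sigma>. (l, r) \<in> R \<and> valuation ar mar \<sigma> \<and>
      Inst \<sigma> 0 l t \<and> (\<exists>Z rs. r = MV Z rs))"

text \<open>Agreement up to depth k (distance < 2^-(k-1)).\<close>
definition agree :: "nat \<Rightarrow> ('f, 'v, 'm) mt \<Rightarrow> ('f, 'v, 'm) mt \<Rightarrow> bool" where
  "agree k s t \<longleftrightarrow> (\<forall>q. length q < k \<longrightarrow> lab s q = lab t q)"

section \<open>Transfinite reductions (ordinals represented by well-orders on nat)\<close>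

definition wlt :: "'i rel \<Rightarrow> 'i \<Rightarrow> 'i \<Rightarrow> bool" where
  "wlt W a b \<longleftrightarrow> (a, b) \<in> W \<and> a \<noteq> b"

definition is_succ :: "'i rel \<Rightarrow> 'i \<Rightarrow> 'i \<Rightarrow> bool" where
  "is_succ W a b \<longleftrightarrow> wlt W a b \<and> \<not> (\<exists>c. wlt W a c \<and> wlt W c b)"

definition is_limit :: "'i rel \<Rightarrow> 'i \<Rightarrow> bool" where
  "is_limit W g \<longleftrightarrow> g \<in> Field W \<and> (\<exists>a. wlt W a g) \<and> \<not> (\<exists>a. is_succ W a g)"

definition is_least :: "'i rel \<Rightarrow> 'i \<Rightarrow> bool" where
  "is_least W a \<longleftrightarrow> a \<in> Field W \<and> (\<forall>b \<in> Field W. (a, b) \<in> W)"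

definition is_greatest :: "'i rel \<Rightarrow> 'i \<Rightarrow> bool" where
  "is_greatest W m \<longleftrightarrow> m \<in> Field W \<and> (\<forall>b \<in> Field W. (b, m) \<in> W)"

text \<open>(W, seq, ps) is a strongly convergent reduction: W well-orders the indices
(an ordinal alpha), alpha is a successor ordinal (W has a greatest element), seq b
is the term at index b, ps b the position of the redex contracted in the step from b
to its successor; at limits the terms converge and depths tend to infinity.\<close>
definition strongly_convergent ::
  "('f \<Rightarrow> nat) \<Rightarrow> ('m \<Rightarrow> nat) \<Rightarrow> (('f, 'v, 'm) mt \<times> ('f, 'v, 'm) mt) set \<Rightarrow>
    nat rel \<Rightarrow> (nat \<Rightarrow> ('f, 'v, 'm) mt) \<Rightarrow> (nat \<Rightarrow> pos) \<Rightarrow> bool" where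
  "strongly_convergent ar mar R W seq ps \<longleftrightarrow>
     Well_order W \<and> (\<exists>m. is_greatest W m) \<and>
     (\<forall>b \<in> Field W. is_pterm ar mar (seq b)) \<and>
     (\<forall>a b. is_succ W a b \<longrightarrow> step ar mar R (ps a) (seq a) (seq b)) \<and>
     (\<forall>g. is_limit W g \<longrightarrow> (\<forall>k. \<exists>b0. wlt W b0 g \<and>
         (\<forall>b. (b0, b) \<in> W \<and> wlt W b g \<longrightarrow> agree k (seq b) (seq g) \<and> k \<le> length (ps b))))"

definition red :: "('f \<Rightarrow> nat) \<Rightarrow> ('m \<Rightarrow> nat) \<Rightarrow> (('f, 'v, 'm) mt \<times> ('f, 'v, 'm) mt) set \<Rightarrow>
    ('f, 'v, 'm) mt \<Rightarrow> ('f, 'v, 'm) mt \<Rightarrow> bool" where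
  "red ar mar R s t \<longleftrightarrow> (\<exists>W seq ps a m. strongly_convergent ar mar R W seq ps \<and>
      is_least W a \<and> is_greatest W m \<and> seq a = s \<and> seq m = t)"

definition hypercollapsing :: "('f \<Rightarrow> nat) \<Rightarrow> ('m \<Rightarrow> nat) \<Rightarrow> (('f, 'v, 'm) mt \<times> ('f, 'v, 'm) mt) set \<Rightarrow>
    ('f, 'v, 'm) mt \<Rightarrow> bool" where
  "hypercollapsing ar mar R s \<longleftrightarrow>
     (\<forall>t. red ar mar R s t \<longrightarrow> (\<exists>t'. red ar mar R t t' \<and> collapsing_root ar mar R t'))"

definition hc_equiv :: "('f \<Rightarrow> nat) \<Rightarrow> ('m \<Rightarrow> nat) \<Rightarrow> (('f, 'v, 'm) mt \<times> ('f, 'v, 'm) mt) set \<Rightarrow>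
    ('f, 'v, 'm) mt \<Rightarrow> ('f, 'v, 'm) mt \<Rightarrow> bool" where
  "hc_equiv ar mar R s t \<longleftrightarrow> (\<exists>P :: pos set.
     (\<forall>q. \<not> (\<exists>p \<in> P. \<exists>q'. q = p @ q') \<longrightarrow> lab s q = lab t q) \<and>
     (\<forall>p \<in> P. \<exists>a b. subt s p = Some a \<and> subt t p = Some b \<and>
        hypercollapsing ar mar R a \<and> hypercollapsing ar mar R b))"

definition confluent_mod_hc :: "('f \<Rightarrow> nat) \<Rightarrow> ('m \<Rightarrow> nat) \<Rightarrow> (('f, 'v, 'm) mt \<times> ('f, 'v, 'm) mt) set \<Rightarrow> bool" where
  "confluent_mod_hc ar mar R \<longleftrightarrow> (\<forall>s t s' t'.
     is_term ar mar s \<and> is_term ar mar t \<and> hc_equiv ar mar R s t \<and>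
     red ar mar R s s' \<and> red ar mar R t t' \<longrightarrow>
     (\<exists>s'' t''. red ar mar R s' s'' \<and> red ar mar R t' t'' \<and> hc_equiv ar mar R s'' t''))"

definition conv :: "('f \<Rightarrow> nat) \<Rightarrow> ('m \<Rightarrow> nat) \<Rightarrow> (('f, 'v, 'm) mt \<times> ('f, 'v, 'm) mt) set \<Rightarrow>
    ('f, 'v, 'm) mt \<Rightarrow> ('f, 'v, 'm) mt \<Rightarrow> bool" where
  "conv ar mar R = (\<lambda>s t. is_term ar mar s \<and> is_term ar mar t \<and>
      (red ar mar R s t \<or> red ar mar R t s))\<^sup>*\<^sup>*"

definition NF_prop :: "('f \<Rightarrow> nat) \<Rightarrow> ('m \<Rightarrow> nat) \<Rightarrow> (('f, 'v, 'm) mt \<times> ('f, 'v, 'm) mt) set \<Rightarrow> bool" where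
  "NF_prop ar mar R \<longleftrightarrow> (\<forall>s t. is_term ar mar s \<and> conv ar mar R s t \<and> normal_form ar mar R t
      \<longrightarrow> red ar mar R s t)"

definition UN_prop :: "('f \<Rightarrow> nat) \<Rightarrow> ('m \<Rightarrow> nat) \<Rightarrow> (('f, 'v, 'm) mt \<times> ('f, 'v, 'm) mt) set \<Rightarrow> bool" where
  "UN_prop ar mar R \<longleftrightarrow> (\<forall>s t. conv ar mar R s t \<and> normal_form ar mar R s \<and> normal_form ar mar R t
      \<longrightarrow> s = t)"

definition UN_red_prop :: "('f \<Rightarrow> nat) \<Rightarrow> ('m \<Rightarrow> nat) \<Rightarrow> (('f, 'v, 'm) mt \<times> ('f, 'v, 'm) mt) set \<Rightarrow> bool" where
  "UN_red_prop ar mar R \<longleftrightarrow> (\<forall>s t t'. is_term ar mar s \<and> red ar mar R s t \<and> red ar mar R s t' \<and>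
      normal_form ar mar R t \<and> normal_form ar mar R t' \<longrightarrow> t = t')"

end

theory Submission
  imports Defs
begin

text \<open>A normal form has no hypercollapsing subterm: a hypercollapsing term reduces to a
  collapsing redex, while a redex-free term only reduces to itself. Hence a term that is
  hc-equivalent to a normal form is equal to it, and confluence modulo hypercollapsing
  subterms behaves like plain confluence next to normal forms. NF then follows by induction
  along the conversion: a backward step from u, where u reduces to the normal form t, is
  closed by confluence applied to u and u; a forward step needs transitivity of strongly
  convergent reductions, obtained by concatenating the two well-orders. UN and its variant
  for reducts of a common term follow from NF as in abstract rewriting.\<close>

lemma subt_append: "subt s p = Some a \<Longrightarrow> subt s (p @ q) = subt a q"
proof (induction p arbitrary: s)
  case (Cons i p)
  then show ?case by (cases s) (auto split: if_splits)
qed simp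

lemma lab_append: "subt s p = Some a \<Longrightarrow> lab s (p @ q) = lab a q"
  by (simp add: lab_def subt_append)

lemma lab_simps [simp]:
  "lab t [] = Some (root_lab t)"
  "lab (Ab s) (i # q) = (if i = 0 then lab s q else None)"
  "lab (Fn f ts) (i # q) = (if i < length ts then lab (ts ! i) q else None)"
  "lab (MV Z ts) (i # q) = (if i < length ts then lab (ts ! i) q else None)"
  by (simp_all add: lab_def)

lemma list_all2_lab_eqI:
  assumes "\<And>i q. (if i < length ts then lab (ts ! i) q else None) =
                  (if i < length us then lab (us ! i) q else None)"
  shows "list_all2 (\<lambda>s t. \<forall>q. lab s q = lab t q) ts us"
proof -
  have len: "length ts = length us"
    using assms[of "length ts" "[]"] assms[of "length us" "[]"]
    by (cases "length ts < length us"; cases "length us < length ts") auto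
  have "lab (ts ! i) q = lab (us ! i) q" if "i < length ts" for i q
    using assms[of i q] that len by simp
  then show ?thesis
    using len by (simp add: list_all2_conv_all_nth)
qed

lemma mt_eqI_lab:
  assumes "\<And>q. lab s q = lab t q" shows "s = t"
  using assms
proof (coinduction arbitrary: s t rule: mt.coinduct)
  case (Eq_mt s t)
  have root: "root_lab s = root_lab t" using Eq_mt[rule_format, of "[]"] by simp
  have below: "lab s (i # q) = lab t (i # q)" for i q using Eq_mt by blast
  show ?case
  proof (cases s)
    case (Ab u)
    then obtain u' where "t = Ab u'" using root by (cases t) (auto simp: root_lab_def)
    then show ?thesis using Ab below[of 0] by simp
  next
    case (Fn f ts)
    then obtain us where t: "t = Fn f us" using root by (cases t) (auto simp: root_lab_def)
    have "list_all2 (\<lambda>s t. \<forall>q. lab s q = lab t q) ts us"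
      by (rule list_all2_lab_eqI) (use below Fn t in simp)
    then show ?thesis using Fn t by (auto elim: list.rel_mono_strong)
  next
    case (MV Z ts)
    then obtain us where t: "t = MV Z us" using root by (cases t) (auto simp: root_lab_def)
    have "list_all2 (\<lambda>s t. \<forall>q. lab s q = lab t q) ts us"
      by (rule list_all2_lab_eqI) (use below MV t in simp)
    then show ?thesis using MV t by (auto elim: list.rel_mono_strong)
  qed (use root in \<open>cases t; auto simp: root_lab_def\<close>)+
qed

lemma is_pterm_subt:
  assumes "subt s p = Some a" "is_pterm ar mar s" shows "is_pterm ar mar a"
  using assms unfolding is_pterm_def wf_mt_def no_mv_def
  by (metis subt_append lab_append)

lemma has_redex_subt:
  assumes "subt s p = Some a" "has_redex ar mar R a" shows "has_redex ar mar R s"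
proof -
  obtain q l r \<sigma> b where "(l, r) \<in> R" "valuation ar mar \<sigma>" "subt a q = Some b" "Inst \<sigma> 0 l b"
    using assms(2) unfolding has_redex_def by blast
  then show ?thesis
    unfolding has_redex_def using subt_append[OF assms(1), of q] by (metis (no_types))
qed

lemma has_redex_if_collapsing_root: "collapsing_root ar mar R t \<Longrightarrow> has_redex ar mar R t"
  unfolding collapsing_root_def has_redex_def by (metis subt.simps(1))

lemma red_refl:
  assumes "is_pterm ar mar t" shows "red ar mar R t t"
proof -
  let ?W = "{(0::nat, 0::nat)}"
  have wo: "Well_order ?W"
    by (auto simp: well_order_on_def linear_order_on_def partial_order_on_def preorder_on_def
        refl_on_def trans_def antisym_def total_on_def Field_def)
  have "strongly_convergent ar mar R ?W (\<lambda>_. t) (\<lambda>_. [])"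
    unfolding strongly_convergent_def using wo assms
    by (auto intro!: exI[of _ 0] simp: is_greatest_def is_succ_def is_limit_def wlt_def Field_def)
  then show ?thesis unfolding red_def
    by (intro exI[of _ ?W] exI[of _ "\<lambda>_. t"] exI[of _ "\<lambda>_. []"] exI[of _ 0])
       (auto simp: is_least_def is_greatest_def Field_def)
qed

lemma Well_order_succ_exists:
  assumes wo: "Well_order W" and am: "(a, m) \<in> W" and ne: "a \<noteq> m"
  shows "\<exists>b. is_succ W a b"
proof -
  have wf: "wf (W - Id)" using wo by (simp add: well_order_on_def)
  have "m \<in> {b. wlt W a b}" using am ne by (simp add: wlt_def)
  then obtain b where b: "b \<in> {b. wlt W a b}" and min: "\<forall>y. (y, b) \<in> W - Id \<longrightarrow> y \<notin> {b. wlt W a b}"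
    using wf[unfolded wf_eq_minimal] by metis
  have "is_succ W a b" unfolding is_succ_def
  proof
    show "wlt W a b" using b by simp
    show "\<not> (\<exists>c. wlt W a c \<and> wlt W c b)" using min by (auto simp: wlt_def)
  qed
  then show ?thesis by blast
qed

lemma red_eq_if_no_redex:
  assumes "red ar mar R s t" and "\<not> has_redex ar mar R s" shows "t = s"
proof -
  obtain W seq ps a m where sc: "strongly_convergent ar mar R W seq ps" and
    l: "is_least W a" and g: "is_greatest W m" and sa: "seq a = s" and tm: "seq m = t"
    using assms(1) unfolding red_def by blast
  have wo: "Well_order W" using sc by (simp add: strongly_convergent_def)
  have am: "(a, m) \<in> W" using l g by (simp add: is_least_def is_greatest_def)
  show ?thesis
  proof (rule ccontr)
    assume "t \<noteq> s"
    then have "a \<noteq> m" using sa tm by auto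
    then obtain b where "is_succ W a b" using Well_order_succ_exists[OF wo am] by blast
    then have "step ar mar R (ps a) (seq a) (seq b)" using sc by (simp add: strongly_convergent_def)
    then have "has_redex ar mar R s" using sa unfolding step_def has_redex_def by blast
    then show False using assms(2) by blast
  qed
qed

lemma not_hypercollapsing_if_no_redex:
  assumes "is_pterm ar mar a" "\<not> has_redex ar mar R a" shows "\<not> hypercollapsing ar mar R a"
proof
  assume "hypercollapsing ar mar R a"
  then obtain t' where "red ar mar R a t'" "collapsing_root ar mar R t'"
    using red_refl[OF assms(1)] unfolding hypercollapsing_def by blast
  then show False
    using red_eq_if_no_redex assms(2) has_redex_if_collapsing_root by metis
qed

lemma hc_equiv_normal_form_eq:
  assumes "hc_equiv ar mar R s t" "normal_form ar mar R s \<or> normal_form ar mar R t"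
  shows "s = t"
proof -
  obtain P where same: "\<forall>q. \<not> (\<exists>p \<in> P. \<exists>q'. q = p @ q') \<longrightarrow> lab s q = lab t q" and
    replaced: "\<forall>p \<in> P. \<exists>a b. subt s p = Some a \<and> subt t p = Some b \<and>
        hypercollapsing ar mar R a \<and> hypercollapsing ar mar R b"
    using assms(1) unfolding hc_equiv_def by blast
  have no_hc: "\<not> hypercollapsing ar mar R a" if "normal_form ar mar R u" "subt u p = Some a" for u p a
    using that not_hypercollapsing_if_no_redex is_pterm_subt has_redex_subt
    unfolding normal_form_def is_term_def by metis
  have "P = {}"
    using replaced assms(2) no_hc by blast
  then show ?thesis
    using same mt_eqI_lab by auto
qed

lemma Well_order_refl: "Well_order r \<Longrightarrow> i \<in> Field r \<Longrightarrow> (i, i) \<in> r"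
  by (metis wo_rel.REFL wo_rel_def refl_onD)

lemma Well_order_trans: "Well_order r \<Longrightarrow> (i, j) \<in> r \<Longrightarrow> (j, k) \<in> r \<Longrightarrow> (i, k) \<in> r"
  by (metis wo_rel.TRANS wo_rel_def transD)

lemma Well_order_antisym: "Well_order r \<Longrightarrow> (i, j) \<in> r \<Longrightarrow> (j, i) \<in> r \<Longrightarrow> i = j"
  by (metis wo_rel.ANTISYM wo_rel_def antisymD)

lemma Well_order_total:
  "Well_order r \<Longrightarrow> i \<in> Field r \<Longrightarrow> j \<in> Field r \<Longrightarrow> (i, j) \<in> r \<or> (j, i) \<in> r"
  by (metis wo_rel.TOTALS wo_rel_def)

definition converges_at_limit ::
  "nat rel \<Rightarrow> (nat \<Rightarrow> ('f, 'v, 'm) mt) \<Rightarrow> (nat \<Rightarrow> pos) \<Rightarrow> nat \<Rightarrow> nat \<Rightarrow> bool" where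
  "converges_at_limit W seq ps g k \<longleftrightarrow> (\<exists>b0. wlt W b0 g \<and>
     (\<forall>b. (b0, b) \<in> W \<and> wlt W b g \<longrightarrow> agree k (seq b) (seq g) \<and> k \<le> length (ps b)))"

lemma strongly_convergent_iff:
  "strongly_convergent ar mar R W seq ps \<longleftrightarrow>
     Well_order W \<and> (\<exists>m. is_greatest W m) \<and>
     (\<forall>b \<in> Field W. is_pterm ar mar (seq b)) \<and>
     (\<forall>a b. is_succ W a b \<longrightarrow> step ar mar R (ps a) (seq a) (seq b)) \<and>
     (\<forall>g k. is_limit W g \<longrightarrow> converges_at_limit W seq ps g k)"
  unfolding strongly_convergent_def converges_at_limit_def by blast

lemma strongly_convergent_limitD:
  "strongly_convergent ar mar R W seq ps \<Longrightarrow> is_limit W g \<Longrightarrow> converges_at_limit W seq ps g k"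
  by (simp add: strongly_convergent_iff)

lemma even_odd_cases:
  fixes x :: nat
  obtains i where "x = 2 * i" | j where "x = Suc (2 * j)"
  by (metis oddE evenE Suc_eq_plus1)

lemma ex_nat_even_odd: "(\<exists>x::nat. P x) \<longleftrightarrow> (\<exists>i. P (2 * i)) \<or> (\<exists>j. P (Suc (2 * j)))"
  by (metis even_odd_cases)

text \<open>Concatenation of a reduction along W1 with one along W2 whose start is the end of
  the first: index i of W1 becomes 2 i, index j of W2 other than its least a2 becomes
  2 j + 1. The step leaving the last term 2 m1 is the first step of the second reduction.\<close>
locale concat_reductions =
  fixes ar :: "'f \<Rightarrow> nat" and mar :: "'m \<Rightarrow> nat"
    and R :: "(('f, 'v, 'm) mt \<times> ('f, 'v, 'm) mt) set"
    and W1 seq1 ps1 a1 m1 W2 seq2 ps2 a2 m2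
  assumes sc1: "strongly_convergent ar mar R W1 seq1 ps1"
    and l1: "is_least W1 a1" and g1: "is_greatest W1 m1"
    and sc2: "strongly_convergent ar mar R W2 seq2 ps2"
    and l2: "is_least W2 a2" and g2: "is_greatest W2 m2"
    and join: "seq1 m1 = seq2 a2" and nontrivial: "a2 \<noteq> m2"
begin

lemma wo1: "Well_order W1" using sc1 by (simp add: strongly_convergent_def)
lemma wo2: "Well_order W2" using sc2 by (simp add: strongly_convergent_def)

definition F2 where "F2 = Field W2 - {a2}"

definition W :: "nat rel" where
  "W = {(x, y). (even x \<and> even y \<and> (x div 2, y div 2) \<in> W1) \<or>
     (even x \<and> odd y \<and> x div 2 \<in> Field W1 \<and> y div 2 \<in> F2) \<or>
     (odd x \<and> odd y \<and> (x div 2, y div 2) \<in> W2 \<and> x div 2 \<in> F2 \<and> y div 2 \<in> F2)}"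

definition seq where "seq x = (if even x then seq1 (x div 2) else seq2 (x div 2))"

definition ps where
  "ps x = (if even x then (if x div 2 = m1 then ps2 a2 else ps1 (x div 2)) else ps2 (x div 2))"

lemma seq_simps [simp]: "seq (2 * i) = seq1 i" "seq (Suc (2 * j)) = seq2 j"
  by (simp_all add: seq_def)

lemma ps_simps [simp]:
  "ps (2 * i) = (if i = m1 then ps2 a2 else ps1 i)" "ps (Suc (2 * j)) = ps2 j"
  by (simp_all add: ps_def)

lemma even_neq_odd [simp]: "(2 * i :: nat) \<noteq> Suc (2 * j)" "Suc (2 * j) \<noteq> (2 * i :: nat)"
  by presburger+

lemma W_simps [simp]:
  "(2 * i, 2 * i') \<in> W \<longleftrightarrow> (i, i') \<in> W1"
  "(2 * i, Suc (2 * j)) \<in> W \<longleftrightarrow> i \<in> Field W1 \<and> j \<in> F2"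
  "(Suc (2 * j), 2 * i) \<notin> W"
  "(Suc (2 * j), Suc (2 * j')) \<in> W \<longleftrightarrow> (j, j') \<in> W2 \<and> j \<in> F2 \<and> j' \<in> F2"
  by (simp_all add: W_def)

lemma wlt_simps [simp]:
  "wlt W (2 * i) (2 * i') \<longleftrightarrow> wlt W1 i i'"
  "wlt W (2 * i) (Suc (2 * j)) \<longleftrightarrow> i \<in> Field W1 \<and> j \<in> F2"
  "\<not> wlt W (Suc (2 * j)) (2 * i)"
  "wlt W (Suc (2 * j)) (Suc (2 * j')) \<longleftrightarrow> wlt W2 j j' \<and> j \<in> F2 \<and> j' \<in> F2"
  by (auto simp: wlt_def)

lemma a2_notin_F2 [simp]: "a2 \<notin> F2"
  by (simp add: F2_def)

lemma F2_Field: "j \<in> F2 \<Longrightarrow> j \<in> Field W2"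
  by (simp add: F2_def)

lemma Field_W_even [simp]: "2 * i \<in> Field W \<longleftrightarrow> i \<in> Field W1"
proof
  assume "2 * i \<in> Field W"
  then obtain y where "(2 * i, y) \<in> W \<or> (y, 2 * i) \<in> W" by (auto simp: Field_def)
  then show "i \<in> Field W1"
    by (cases y rule: even_odd_cases) (auto intro: FieldI1 FieldI2)
qed (metis FieldI1 W_simps(1) Well_order_refl[OF wo1])

lemma Field_W_odd [simp]: "Suc (2 * j) \<in> Field W \<longleftrightarrow> j \<in> F2"
proof
  assume "Suc (2 * j) \<in> Field W"
  then obtain y where "(Suc (2 * j), y) \<in> W \<or> (y, Suc (2 * j)) \<in> W" by (auto simp: Field_def)
  then show "j \<in> F2"
    by (cases y rule: even_odd_cases) auto
qed (metis FieldI1 W_simps(4) Well_order_refl[OF wo2] F2_Field)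

lemma W_trans: "trans W"
proof (rule transI)
  fix x y z assume "(x, y) \<in> W" "(y, z) \<in> W"
  then show "(x, z) \<in> W"
  proof (cases x rule: even_odd_cases; cases z rule: even_odd_cases)
    fix i k assume "x = 2 * i" "z = 2 * k"
    then show ?thesis using \<open>(x, y) \<in> W\<close> \<open>(y, z) \<in> W\<close>
      by (cases y rule: even_odd_cases) (auto intro: Well_order_trans[OF wo1])
  next
    fix i k assume "x = 2 * i" "z = Suc (2 * k)"
    then show ?thesis using \<open>(x, y) \<in> W\<close> \<open>(y, z) \<in> W\<close>
      by (cases y rule: even_odd_cases) (auto intro: FieldI1)
  next
    fix i k assume "x = Suc (2 * i)" "z = 2 * k"
    then show ?thesis using \<open>(x, y) \<in> W\<close> \<open>(y, z) \<in> W\<close>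
      by (cases y rule: even_odd_cases) auto
  next
    fix i k assume "x = Suc (2 * i)" "z = Suc (2 * k)"
    then show ?thesis using \<open>(x, y) \<in> W\<close> \<open>(y, z) \<in> W\<close>
      by (cases y rule: even_odd_cases) (auto intro: Well_order_trans[OF wo2])
  qed
qed

lemma W_wf: "wf (W - Id)"
  unfolding wf_eq_minimal
proof (intro allI impI)
  fix Q x assume "(x :: nat) \<in> Q"
  show "\<exists>z\<in>Q. \<forall>y. (y, z) \<in> W - Id \<longrightarrow> y \<notin> Q"
  proof (cases "\<exists>i. 2 * i \<in> Q")
    case True
    then obtain i where iQ: "i \<in> {i. 2 * i \<in> Q}"
      and min: "\<forall>i'. (i', i) \<in> W1 - Id \<longrightarrow> i' \<notin> {i. 2 * i \<in> Q}"
      using wo_rel.WF[of W1] wo1 unfolding wo_rel_def wf_eq_minimal by (metis mem_Collect_eq)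
    have "y \<notin> Q" if "(y, 2 * i) \<in> W - Id" for y
      using that min by (cases y rule: even_odd_cases) auto
    then show ?thesis using iQ by blast
  next
    case False
    then obtain j0 where "Suc (2 * j0) \<in> Q" using \<open>x \<in> Q\<close> by (metis even_odd_cases)
    then obtain j where jQ: "j \<in> {j. Suc (2 * j) \<in> Q}"
      and min: "\<forall>j'. (j', j) \<in> W2 - Id \<longrightarrow> j' \<notin> {j. Suc (2 * j) \<in> Q}"
      using wo_rel.WF[of W2] wo2 unfolding wo_rel_def wf_eq_minimal by (metis mem_Collect_eq)
    have "y \<notin> Q" if "(y, Suc (2 * j)) \<in> W - Id" for y
      using that min False by (cases y rule: even_odd_cases) auto
    then show ?thesis using jQ by blast
  qed
qed

lemma W_Well_order: "Well_order W"
  unfolding well_order_on_def linear_order_on_def partial_order_on_def preorder_on_def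
proof (intro conjI W_trans W_wf)
  show "W \<subseteq> Field W \<times> Field W"
    by (auto intro: FieldI1 FieldI2)
  show "refl_on (Field W) W"
  proof (rule refl_onI)
    fix x assume "x \<in> Field W"
    then show "(x, x) \<in> W"
      by (cases x rule: even_odd_cases)
         (auto intro: Well_order_refl[OF wo1] Well_order_refl[OF wo2] F2_Field)
  qed
  show "antisym W"
  proof (rule antisymI)
    fix x y assume "(x, y) \<in> W" "(y, x) \<in> W"
    then show "x = y"
      by (cases x rule: even_odd_cases; cases y rule: even_odd_cases)
         (auto dest: Well_order_antisym[OF wo1] Well_order_antisym[OF wo2])
  qed
  show "total_on (Field W) W"
  proof (rule total_onI)
    fix x y assume "x \<in> Field W" "y \<in> Field W"
    then show "(x, y) \<in> W \<or> (y, x) \<in> W"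
      by (cases x rule: even_odd_cases; cases y rule: even_odd_cases)
         (auto dest: Well_order_total[OF wo1] Well_order_total[OF wo2] F2_Field)
  qed
qed

lemma m1_maximal: "\<not> wlt W1 m1 i"
  using g1 Well_order_antisym[OF wo1] unfolding is_greatest_def wlt_def by (metis FieldI2)

lemma a2_minimal: "\<not> wlt W2 j a2"
  using l2 Well_order_antisym[OF wo2] unfolding is_least_def wlt_def by (metis FieldI1)

lemma a2_below_F2: "j \<in> F2 \<Longrightarrow> wlt W2 a2 j"
  using l2 unfolding is_least_def wlt_def F2_def by auto

lemma wlt_F2_right: "wlt W2 j j' \<Longrightarrow> j' \<in> F2"
  using a2_minimal unfolding F2_def wlt_def by (auto intro: FieldI2)

lemma wlt_F2_left: "wlt W2 j j' \<Longrightarrow> j \<noteq> a2 \<Longrightarrow> j \<in> F2"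
  unfolding F2_def wlt_def by (auto intro: FieldI1)

lemma is_succ_even_even [simp]: "is_succ W (2 * i) (2 * i') \<longleftrightarrow> is_succ W1 i i'"
  unfolding is_succ_def ex_nat_even_odd[of "\<lambda>c. wlt W _ c \<and> wlt W c _"] by simp

lemma is_succ_odd_even [simp]: "\<not> is_succ W (Suc (2 * j)) (2 * i)"
  unfolding is_succ_def by simp

lemma is_succ_odd_odd [simp]:
  "is_succ W (Suc (2 * j)) (Suc (2 * j')) \<longleftrightarrow> j \<noteq> a2 \<and> is_succ W2 j j'"
  unfolding is_succ_def ex_nat_even_odd[of "\<lambda>c. wlt W _ c \<and> wlt W c _"]
  using wlt_F2_right[of j] wlt_F2_left[of j] by auto

lemma is_succ_even_odd [simp]:
  "is_succ W (2 * i) (Suc (2 * j)) \<longleftrightarrow> i = m1 \<and> is_succ W2 a2 j"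
proof
  assume succ: "is_succ W (2 * i) (Suc (2 * j))"
  then have i: "i \<in> Field W1" and j: "j \<in> F2" by (simp_all add: is_succ_def)
  have "\<not> (wlt W (2 * i) (2 * m1) \<and> wlt W (2 * m1) (Suc (2 * j)))"
    using succ unfolding is_succ_def by blast
  then have "\<not> wlt W1 i m1"
    using j g1 by (simp add: is_greatest_def)
  then have "i = m1"
    using i g1 by (simp add: is_greatest_def wlt_def)
  moreover have "\<not> (\<exists>c. wlt W2 a2 c \<and> wlt W2 c j)"
  proof
    assume "\<exists>c. wlt W2 a2 c \<and> wlt W2 c j"
    then obtain c where "wlt W2 a2 c" "wlt W2 c j" by blast
    then have "wlt W (2 * i) (Suc (2 * c)) \<and> wlt W (Suc (2 * c)) (Suc (2 * j))"
      using i j wlt_F2_right by simp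
    then show False
      using succ unfolding is_succ_def by blast
  qed
  then have "is_succ W2 a2 j"
    using a2_below_F2[OF j] by (simp add: is_succ_def)
  ultimately show "i = m1 \<and> is_succ W2 a2 j" ..
next
  assume "i = m1 \<and> is_succ W2 a2 j"
  moreover have "m1 \<in> Field W1" using g1 by (simp add: is_greatest_def)
  ultimately show "is_succ W (2 * i) (Suc (2 * j))"
    unfolding is_succ_def ex_nat_even_odd[of "\<lambda>c. wlt W _ c \<and> wlt W c _"]
    using m1_maximal a2_below_F2 wlt_F2_right by (fastforce simp: is_succ_def)
qed

lemma W_step:
  assumes "is_succ W x y" shows "step ar mar R (ps x) (seq x) (seq y)"
proof -
  have step1: "is_succ W1 i i' \<Longrightarrow> step ar mar R (ps1 i) (seq1 i) (seq1 i')" for i i'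
    using sc1 by (simp add: strongly_convergent_def)
  have step2: "is_succ W2 j j' \<Longrightarrow> step ar mar R (ps2 j) (seq2 j) (seq2 j')" for j j'
    using sc2 by (simp add: strongly_convergent_def)
  have not_last: "is_succ W1 i i' \<Longrightarrow> i \<noteq> m1" for i i'
    using m1_maximal by (auto simp: is_succ_def)
  show ?thesis
    using assms step1 step2 not_last join
    by (cases x rule: even_odd_cases; cases y rule: even_odd_cases) auto
qed

lemma is_limit_even: "is_limit W (2 * i) \<Longrightarrow> is_limit W1 i"
  unfolding is_limit_def ex_nat_even_odd[of "\<lambda>a. wlt W a _"]
  by (auto dest: spec[of _ "2 * _"])

lemma is_limit_odd:
  assumes "is_limit W (Suc (2 * j))" shows "is_limit W2 j"
  unfolding is_limit_def
proof (intro conjI notI)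
  have j: "j \<in> F2" using assms by (simp add: is_limit_def)
  then show "j \<in> Field W2" "\<exists>a. wlt W2 a j"
    using F2_Field a2_below_F2 by blast+
  assume "\<exists>a. is_succ W2 a j"
  then obtain a where "is_succ W2 a j" by blast
  then have "is_succ W (2 * m1) (Suc (2 * j)) \<or> is_succ W (Suc (2 * a)) (Suc (2 * j))"
    by auto
  then show False
    using assms unfolding is_limit_def by blast
qed

lemma converges_at_limit_even:
  assumes "is_limit W (2 * i)" shows "converges_at_limit W seq ps (2 * i) k"
proof -
  obtain b0 where b0: "wlt W1 b0 i" and conv: "\<And>b. (b0, b) \<in> W1 \<Longrightarrow> wlt W1 b i \<Longrightarrow>
      agree k (seq1 b) (seq1 i) \<and> k \<le> length (ps1 b)"
    using strongly_convergent_limitD[OF sc1 is_limit_even[OF assms]]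
    unfolding converges_at_limit_def by blast
  have "agree k (seq b) (seq (2 * i)) \<and> k \<le> length (ps b)"
    if "(2 * b0, b) \<in> W" "wlt W b (2 * i)" for b
    using that conv m1_maximal by (cases b rule: even_odd_cases) auto
  then show ?thesis
    unfolding converges_at_limit_def using b0 by (intro exI[of _ "2 * b0"]) simp
qed

lemma converges_at_limit_odd:
  assumes "is_limit W (Suc (2 * j))" shows "converges_at_limit W seq ps (Suc (2 * j)) k"
proof -
  have lim: "is_limit W2 j" and j: "j \<in> F2"
    using is_limit_odd[OF assms] assms by (simp_all add: is_limit_def)
  obtain b0 where b0: "wlt W2 b0 j" and conv: "\<And>b. (b0, b) \<in> W2 \<Longrightarrow> wlt W2 b j \<Longrightarrow>
      agree k (seq2 b) (seq2 j) \<and> k \<le> length (ps2 b)"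
    using strongly_convergent_limitD[OF sc2 lim] unfolding converges_at_limit_def by blast
  txt \<open>The start a2 has no odd copy, so the bound b0 may have to be moved past it.\<close>
  obtain c where c: "c \<in> F2" "wlt W2 c j" "(b0, c) \<in> W2"
  proof (cases "b0 = a2")
    case True
    have "\<not> is_succ W2 a2 j" "wlt W2 a2 j"
      using lim a2_below_F2[OF j] by (auto simp: is_limit_def)
    then obtain c where "wlt W2 a2 c" "wlt W2 c j"
      unfolding is_succ_def by blast
    then show ?thesis
      using that[of c] True wlt_F2_right by (simp add: wlt_def)
  next
    case False
    then show ?thesis
      using that[of b0] b0 wlt_F2_left Well_order_refl[OF wo2] F2_Field by blast
  qed
  have "agree k (seq b) (seq (Suc (2 * j))) \<and> k \<le> length (ps b)"
    if "(Suc (2 * c), b) \<in> W" "wlt W b (Suc (2 * j))" for b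
    using that conv c(3) Well_order_trans[OF wo2] by (cases b rule: even_odd_cases) auto
  then show ?thesis
    unfolding converges_at_limit_def using c j by (intro exI[of _ "Suc (2 * c)"]) simp
qed

lemma W_least: "is_least W (2 * a1)"
  unfolding is_least_def
proof (intro conjI ballI)
  show "2 * a1 \<in> Field W" using l1 by (simp add: is_least_def)
  fix b assume "b \<in> Field W"
  then show "(2 * a1, b) \<in> W"
    using l1 by (cases b rule: even_odd_cases) (auto simp: is_least_def)
qed

lemma W_greatest: "is_greatest W (Suc (2 * m2))"
  unfolding is_greatest_def
proof (intro conjI ballI)
  have m2: "m2 \<in> F2" using g2 nontrivial by (simp add: is_greatest_def F2_def)
  then show "Suc (2 * m2) \<in> Field W" by simp
  fix b assume "b \<in> Field W"
  then show "(b, Suc (2 * m2)) \<in> W"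
    using g2 m2 by (cases b rule: even_odd_cases) (auto simp: is_greatest_def F2_def)
qed

lemma W_strongly_convergent: "strongly_convergent ar mar R W seq ps"
  unfolding strongly_convergent_iff
proof (intro conjI allI impI ballI)
  show "Well_order W" by (rule W_Well_order)
  show "\<exists>m. is_greatest W m" using W_greatest ..
  fix b assume "b \<in> Field W"
  then show "is_pterm ar mar (seq b)"
    using sc1 sc2 F2_Field by (cases b rule: even_odd_cases) (auto simp: strongly_convergent_def)
next
  fix a b assume "is_succ W a b"
  then show "step ar mar R (ps a) (seq a) (seq b)" by (rule W_step)
next
  fix g k assume "is_limit W g"
  then show "converges_at_limit W seq ps g k"
    by (cases g rule: even_odd_cases) (simp_all add: converges_at_limit_even converges_at_limit_odd)
qed

lemma red_concat: "red ar mar R (seq1 a1) (seq2 m2)"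
  unfolding red_def using W_strongly_convergent W_least W_greatest
  by (metis seq_simps)

end

lemma red_trans:
  assumes "red ar mar R s u" "red ar mar R u t" shows "red ar mar R s t"
proof -
  obtain W1 seq1 ps1 a1 m1 where 1: "strongly_convergent ar mar R W1 seq1 ps1"
    "is_least W1 a1" "is_greatest W1 m1" "seq1 a1 = s" "seq1 m1 = u"
    using assms(1) unfolding red_def by blast
  obtain W2 seq2 ps2 a2 m2 where 2: "strongly_convergent ar mar R W2 seq2 ps2"
    "is_least W2 a2" "is_greatest W2 m2" "seq2 a2 = u" "seq2 m2 = t"
    using assms(2) unfolding red_def by blast
  show ?thesis
  proof (cases "a2 = m2")
    case True
    then show ?thesis using assms(1) 2 by simp
  next
    case False
    interpret concat_reductions ar mar R W1 seq1 ps1 a1 m1 W2 seq2 ps2 a2 m2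
      using 1 2 False by unfold_locales simp_all
    show ?thesis using red_concat 1 2 by simp
  qed
qed

lemma hc_equiv_refl: "hc_equiv ar mar R s s"
  unfolding hc_equiv_def by (rule exI[of _ "{}"]) simp

lemma red_to_normal_form_if_conv:
  assumes "confluent_mod_hc ar mar R" "conv ar mar R s t" "normal_form ar mar R t"
  shows "red ar mar R s t"
  using assms(2,3) unfolding conv_def
proof (induction rule: converse_rtranclp_induct)
  case base
  then show ?case by (intro red_refl) (simp add: normal_form_def is_term_def)
next
  case (step s u)
  then have terms: "is_term ar mar s" "is_term ar mar u" and u_t: "red ar mar R u t" by auto
  from step(1) consider "red ar mar R s u" | "red ar mar R u s" by blast
  then show ?case
  proof cases
    case 1
    then show ?thesis using u_t red_trans by blast
  next
    case 2
    obtain s' t' where "red ar mar R s s'" "red ar mar R t t'" "hc_equiv ar mar R s' t'"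
      using assms(1) terms(2) hc_equiv_refl 2 u_t unfolding confluent_mod_hc_def by blast
    moreover have "t' = t"
      using red_eq_if_no_redex \<open>red ar mar R t t'\<close> step.prems by (auto simp: normal_form_def)
    ultimately show ?thesis
      using hc_equiv_normal_form_eq step.prems by metis
  qed
qed

lemma NF_prop_if_confluent_mod_hc: "confluent_mod_hc ar mar R \<Longrightarrow> NF_prop ar mar R"
  unfolding NF_prop_def using red_to_normal_form_if_conv by blast

lemma UN_prop_if_NF_prop: "NF_prop ar mar R \<Longrightarrow> UN_prop ar mar R"
  unfolding NF_prop_def UN_prop_def normal_form_def by (metis red_eq_if_no_redex)

lemma UN_red_prop_if_UN_prop:
  assumes "UN_prop ar mar R" shows "UN_red_prop ar mar R"
  unfolding UN_red_prop_def
proof (intro allI impI)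
  fix s t t' assume *: "is_term ar mar s \<and> red ar mar R s t \<and> red ar mar R s t' \<and>
      normal_form ar mar R t \<and> normal_form ar mar R t'"
  then have "conv ar mar R t s" "conv ar mar R s t'"
    unfolding conv_def normal_form_def by auto
  then have "conv ar mar R t t'"
    unfolding conv_def by (rule rtranclp_trans)
  then show "t = t'"
    using assms * unfolding UN_prop_def by blast
qed

theorem lemma5p4:
  fixes ar :: "'f \<Rightarrow> nat" and mar :: "'m \<Rightarrow> nat"
    and R :: "(('f, 'v, 'm) mt \<times> ('f, 'v, 'm) mt) set"
  assumes "icrs_rules ar mar R"
    and "confluent_mod_hc ar mar R"
  shows "NF_prop ar mar R \<and> UN_prop ar mar R \<and> UN_red_prop ar mar R"
proof -
  have "NF_prop ar mar R" using assms(2) by (rule NF_prop_if_confluent_mod_hc)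
  moreover have "UN_prop ar mar R" using calculation by (rule UN_prop_if_NF_prop)
  moreover have "UN_red_prop ar mar R" using calculation(2) by (rule UN_red_prop_if_UN_prop)
  ultimately show ?thesis by blast
qed

end
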